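(* Let $p(x)=\prod_{j=1}^m (x-\alpha_j)^{b_j}$ where $\alpha_1,\dots,\alpha_m$ are distinct negative real numbers, $b_j\in\mathbb N$, and let $\alpha_1$ be the largest of them. Let $q$ be a polynomial with real coefficients, $\deg(q)<\deg(p)$, having no common roots with $p$. If $(q(n)/p(n))_{n\in\mathbb Z_+}$ is a Hausdorff moment sequence, then $q(\alpha_1)>0$. Conversely, if $q$ is monic of degree $1$ and $q(\alpha_1)>0$, then $(q(n)/p(n))_{n\in\mathbb Z_+}$ is a Hausdorff moment sequence.
   Context: A sequence $(x_n)_{n\in\mathbb Z_+}$ of positive numbers is a Hausdorff moment sequence if there is a positive Radon measure $\mu$ on $[0,1]$ with $x_n=\int_0^1 t^n\,d\mu(t)$ for all $n\in\mathbb Z_+$. *)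

theory Defs
  imports "HOL-Analysis.Analysis" "HOL-Computational_Algebra.Polynomial"
begin

text \<open>Radon measures on the compact set [0,1] are exactly the finite Borel measures.\<close>
definition hausdorff_moment_seq :: "(nat \<Rightarrow> real) \<Rightarrow> bool" where
  "hausdorff_moment_seq x \<longleftrightarrow>
     (\<forall>n. x n > 0) \<and>
     (\<exists>M :: real measure.
        space M = {0..1} \<and> sets M = sets (restrict_space borel {0..1}) \<and>
        finite_measure M \<and>
        (\<forall>n. integrable M (\<lambda>t. t ^ n) \<and> x n = (\<integral>t. t ^ n \<partial>M)))"

end

(*
  Moment sequences on [0,1] are closed under products (push the product measure forward
  along multiplication), and contain 1/(n+e) and (n+c)/(n+e) for c >= e > 0. Sufficiency
  follows by writing q(n)/p(n) = (n+c)/(n-alpha_1) * 1/p_1(n) with p_1 = p/(x-alpha_1).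
  For necessity, multiplying by such factors turns q(n)/p(n) into q(n)/prod_i (n+e_i) with
  distinct e_i > 0, the smallest being e_0 = -alpha_1 - eps. The K-th alternating binomial
  sum of a moment sequence is the integral of (1-t)^K, hence nonnegative; for a sum of
  simple fractions it is dominated, as K grows, by the coefficient at the rightmost pole
  -e_0, which is q(alpha_1 + eps) up to a positive factor. Letting eps tend to 0 gives
  q(alpha_1) >= 0, and q(alpha_1) is nonzero since p(alpha_1) = 0.
*)
theory Submission
  imports Defs
begin

definition moment_seq :: "(nat \<Rightarrow> real) \<Rightarrow> bool" where
  "moment_seq x \<longleftrightarrow> (\<exists>M :: real measure.
     space M = {0..1} \<and> sets M = sets (restrict_space borel {0..1}) \<and> finite_measure M \<and>
     (\<forall>n. integrable M (\<lambda>t. t ^ n) \<and> x n = (\<integral>t. t ^ n \<partial>M)))"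

lemma moment_seq_distr:
  assumes "finite_measure B" and \<phi>: "\<phi> \<in> measurable B (restrict_space borel {0..1})"
  shows "moment_seq (\<lambda>n. \<integral>s. \<phi> s ^ n \<partial>B)"
  unfolding moment_seq_def
proof (intro exI conjI allI)
  interpret B: finite_measure B by fact
  let ?P = "distr B (restrict_space borel {0..1}) \<phi>"
  have \<phi>_borel: "\<phi> \<in> borel_measurable B"
    using \<phi> by (rule measurable_compose) (rule measurable_restrict_space1, simp)
  have \<phi>_range: "\<phi> s \<in> {0..1}" if "s \<in> space B" for s
    using measurable_space[OF \<phi> that] by simp
  show "space ?P = {0..1}" "sets ?P = sets (restrict_space borel {0..1})" by simp_all
  show "finite_measure ?P" by (rule B.finite_measure_distr[OF \<phi>])
  fix n
  have "integrable B (\<lambda>s. \<phi> s ^ n)"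
    by (rule B.integrable_const_bound[where B=1])
       (use \<phi>_range \<phi>_borel in \<open>auto simp: power_abs power_le_one\<close>)
  then show "integrable ?P (\<lambda>t. t ^ n)"
    using \<phi> by (subst integrable_distr_eq) (auto intro: measurable_restrict_space1)
  show "(\<integral>s. \<phi> s ^ n \<partial>B) = (\<integral>t. t ^ n \<partial>?P)"
    using \<phi> by (subst integral_distr) (auto intro: measurable_restrict_space1)
qed

lemma moment_seq_one: "moment_seq (\<lambda>n. 1)"
proof -
  let ?B = "restrict_space lborel {0..1::real}"
  have "finite_measure ?B"
    by (rule finite_measureI) (simp add: emeasure_restrict_space)
  then have "moment_seq (\<lambda>n. \<integral>s. 1 ^ n \<partial>?B)"
    by (rule moment_seq_distr) (intro measurable_restrict_space2, auto)
  then show ?thesis by (simp add: measure_restrict_space)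
qed

lemma moment_seq_mult:
  assumes "moment_seq x" "moment_seq y"
  shows "moment_seq (\<lambda>n. x n * y n)"
proof -
  obtain M where M: "space M = {0..1}" "sets M = sets (restrict_space borel {0..1})"
     "finite_measure M" "\<And>n. integrable M (\<lambda>t. t ^ n)" "\<And>n. x n = (\<integral>t. t ^ n \<partial>M)"
    using assms(1) unfolding moment_seq_def by blast
  obtain N where N: "space N = {0..1}" "sets N = sets (restrict_space borel {0..1})"
     "finite_measure N" "\<And>n. integrable N (\<lambda>t. t ^ n)" "\<And>n. y n = (\<integral>t. t ^ n \<partial>N)"
    using assms(2) unfolding moment_seq_def by blast
  interpret M: finite_measure M by fact
  interpret N: finite_measure N by fact
  interpret MN: pair_sigma_finite M N by unfold_locales
  interpret MN: finite_measure "M \<Otimes>\<^sub>M N"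
    by (rule finite_measure_pair_measure) unfold_locales
  have "(\<lambda>s. s) \<in> borel_measurable M" "(\<lambda>t. t) \<in> borel_measurable N"
    by (simp_all add: measurable_cong_sets[OF M(2) refl] measurable_cong_sets[OF N(2) refl]
          measurable_restrict_space1)
  then have mult_borel: "(\<lambda>(s, t). s * t) \<in> borel_measurable (M \<Otimes>\<^sub>M N)"
    unfolding case_prod_beta by measurable
  then have mult_meas: "(\<lambda>(s, t). s * t) \<in> measurable (M \<Otimes>\<^sub>M N) (restrict_space borel {0..1})"
    by (intro measurable_restrict_space2) (auto simp: M(1) N(1) space_pair_measure mult_le_one)
  have "moment_seq (\<lambda>n. \<integral>z. (case z of (s, t) \<Rightarrow> s * t) ^ n \<partial>(M \<Otimes>\<^sub>M N))"
    using MN.finite_measure_axioms mult_meas by (rule moment_seq_distr)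
  moreover have "(\<integral>z. (case z of (s, t) \<Rightarrow> s * t) ^ n \<partial>(M \<Otimes>\<^sub>M N)) = x n * y n" for n
  proof -
    have "integrable (M \<Otimes>\<^sub>M N) (\<lambda>(s, t). s ^ n * t ^ n)"
      by (rule MN.integrable_const_bound[where B=1])
         (use mult_borel in
          \<open>auto simp: space_pair_measure M(1) N(1) abs_mult power_le_one mult_le_one
             power_mult_distrib[symmetric] case_prod_beta\<close>)
    then show ?thesis
      using MN.integral_fst[of "\<lambda>s t. s ^ n * t ^ n"]
      by (simp add: M(5) N(5) power_mult_distrib split_beta')
  qed
  ultimately show ?thesis by simp
qed

lemma has_integral_scaled_powr:
  fixes L e :: real
  assumes "L > 0" "e > -1"
  shows "((\<lambda>s. (s / L) powr e) has_integral L / (e + 1)) {0..L}"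
proof -
  have "((\<lambda>s. s powr e * (1 / L powr e)) has_integral L powr (e + 1) / (e + 1) * (1 / L powr e)) {0..L}"
    by (intro has_integral_mult_left has_integral_powr_from_0) (use assms in auto)
  moreover have "L powr (e + 1) / (e + 1) * (1 / L powr e) = L / (e + 1)"
    using assms by (simp add: powr_add)
  ultimately show ?thesis
    by (simp add: powr_divide)
qed

lemma has_integral_truncated_powr_power:
  fixes K L a :: real
  assumes K: "K \<ge> 0" and L: "L > 0" and a: "a > 0"
  shows "((\<lambda>s. min 1 ((s / L) powr (1 / a)) ^ n) has_integral L * a / (real n + a) + K) {0..L + K}"
proof (rule has_integral_combine)
  show "((\<lambda>s. min 1 ((s / L) powr (1 / a)) ^ n) has_integral L * a / (real n + a)) {0..L}"
  proof (rule has_integral_spike_finite[of "{0}"])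
    show "((\<lambda>s. (s / L) powr (real n / a)) has_integral L * a / (real n + a)) {0..L}"
      using has_integral_scaled_powr[OF L, of "real n / a"] a
      by (simp add: field_simps less_le_trans[of _ 0])
    fix s assume "s \<in> {0..L} - {0}"
    then show "min 1 ((s / L) powr (1 / a)) ^ n = (s / L) powr (real n / a)"
      using L a by (simp add: powr_le1 powr_power)
  qed simp
  show "((\<lambda>s. min 1 ((s / L) powr (1 / a)) ^ n) has_integral K) {L..L + K}"
  proof (rule has_integral_eq)
    show "((\<lambda>s::real. 1::real) has_integral K) {L..L + K}"
      using has_integral_const_real[where a=L and b="L + K" and c="1::real"] K by simp
    fix s assume "s \<in> {L..L + K}"
    then show "1 = min 1 ((s / L) powr (1 / a)) ^ n"
      using L a by (simp add: ge_one_powr_ge_zero)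
  qed
qed (use K L in auto)

lemma moment_seq_const_plus_inverse:
  fixes K c a :: real
  assumes K: "K \<ge> 0" and c: "c > 0" and a: "a > 0"
  shows "moment_seq (\<lambda>n. K + c / (real n + a))"
proof -
  define L where "L = c / a"
  have L: "L > 0" using c a by (simp add: L_def)
  \<comment> \<open>\<open>\<phi>\<close> pushes Lebesgue measure on \<open>[0, L]\<close> forward to a density proportional to \<open>t ^ (a - 1)\<close>
     and collapses \<open>[L, L + K]\<close> to an atom of mass \<open>K\<close> at \<open>1\<close>.\<close>
  define \<phi> where "\<phi> s = min 1 ((s / L) powr (1 / a))" for s
  define B where "B = restrict_space lborel {0..L + K}"
  have "finite_measure B"
    unfolding B_def by (rule finite_measureI) (use L K in \<open>simp add: emeasure_restrict_space\<close>)
  moreover have "\<phi> \<in> measurable B (restrict_space borel {0..1})"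
    unfolding B_def \<phi>_def
    by (intro measurable_restrict_space2 measurable_restrict_space1) (auto, measurable)
  ultimately have "moment_seq (\<lambda>n. \<integral>s. \<phi> s ^ n \<partial>B)"
    by (rule moment_seq_distr)
  moreover have "(\<integral>s. \<phi> s ^ n \<partial>B) = K + c / (real n + a)" for n
  proof -
    have "continuous_on {0..L + K} (\<lambda>s. \<phi> s ^ n)"
      unfolding \<phi>_def using L a by (intro continuous_intros continuous_on_powr') auto
    then have "(LINT s:{0..L + K}|lborel. \<phi> s ^ n) = L * a / (real n + a) + K"
      using has_integral_truncated_powr_power[OF K L a, of n] unfolding \<phi>_def
      by (simp add: set_borel_integral_eq_integral(2) borel_integrable_atLeastAtMost' integral_unique)
    then show ?thesis
      using a unfolding B_def set_lebesgue_integral_def by (simp add: integral_restrict_space L_def)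
  qed
  ultimately show ?thesis by simp
qed

lemma moment_seq_power: "moment_seq x \<Longrightarrow> moment_seq (\<lambda>n. x n ^ k)"
  by (induction k) (auto intro: moment_seq_one moment_seq_mult)

lemma moment_seq_prod:
  "finite A \<Longrightarrow> (\<And>j. j \<in> A \<Longrightarrow> moment_seq (f j)) \<Longrightarrow> moment_seq (\<lambda>n. \<Prod>j\<in>A. f j n)"
  by (induction A rule: finite_induct) (auto intro: moment_seq_one moment_seq_mult)

lemma moment_seq_inverse:
  fixes e :: real
  assumes "e > 0"
  shows "moment_seq (\<lambda>n. 1 / (real n + e))"
  using moment_seq_const_plus_inverse[of 0 1 e] assms by simp

lemma moment_seq_shift_ratio:
  fixes c e :: real
  assumes "0 < e" "e \<le> c"
  shows "moment_seq (\<lambda>n. (real n + c) / (real n + e))"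
proof (cases "c = e")
  case True
  with assms show ?thesis
    using moment_seq_one by (simp add: add_pos_nonneg)
next
  case False
  with assms have "moment_seq (\<lambda>n. 1 + (c - e) / (real n + e))"
    by (intro moment_seq_const_plus_inverse) auto
  moreover have "1 + (c - e) / (real n + e) = (real n + c) / (real n + e)" for n
    using assms by (simp add: field_simps add_pos_nonneg)
  ultimately show ?thesis by simp
qed

lemma moment_seq_alternating_binomial_sum_nonneg:
  assumes "moment_seq x"
  shows "0 \<le> (\<Sum>k\<le>K. (-1) ^ k * real (K choose k) * x k)"
proof -
  obtain M where M: "space M = {0..1}" "\<And>n. integrable M (\<lambda>t. t ^ n)" "\<And>n. x n = (\<integral>t. t ^ n \<partial>M)"
    using assms unfolding moment_seq_def by blast
  have "(\<Sum>k\<le>K. (-1) ^ k * real (K choose k) * x k)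
      = (\<integral>t. (\<Sum>k\<le>K. (-1) ^ k * real (K choose k) * t ^ k) \<partial>M)"
    by (simp add: M(2,3))
  also have "\<dots> = (\<integral>t. (1 - t) ^ K \<partial>M)"
  proof (rule Bochner_Integration.integral_cong[OF refl])
    fix t :: real
    show "(\<Sum>k\<le>K. (-1) ^ k * real (K choose k) * t ^ k) = (1 - t) ^ K"
      using binomial_ring[of "- t" 1 K] by (simp add: power_minus' mult_ac)
  qed
  also have "\<dots> \<ge> 0"
    by (rule integral_nonneg_AE) (auto simp: M(1))
  finally show ?thesis .
qed

lemma alternating_binomial_sum_Suc:
  fixes g :: "nat \<Rightarrow> real"
  shows "(\<Sum>k\<le>Suc K. (-1) ^ k * real (Suc K choose k) * g k) =
         (\<Sum>k\<le>K. (-1) ^ k * real (K choose k) * g k) - (\<Sum>k\<le>K. (-1) ^ k * real (K choose k) * g (Suc k))"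
proof -
  have "(\<Sum>k\<le>Suc K. (-1) ^ k * real (Suc K choose k) * g k) =
        g 0 - (\<Sum>k\<le>K. (-1) ^ k * real (K choose k) * g (Suc k))
            - (\<Sum>k\<le>K. (-1) ^ k * real (K choose Suc k) * g (Suc k))"
    by (subst sum.atMost_Suc_shift) (simp add: sum.distrib[symmetric] sum_negf[symmetric] algebra_simps)
  moreover have "(\<Sum>k\<le>K. (-1) ^ k * real (K choose k) * g k) =
        g 0 - (\<Sum>k\<le>K. (-1) ^ k * real (K choose Suc k) * g (Suc k))"
    by (subst sum.atMost_shift) (simp_all add: lessThan_Suc_atMost[symmetric] sum_negf[symmetric])
  ultimately show ?thesis by simp
qed

lemma alternating_binomial_sum_inverse:
  fixes e :: real
  assumes "e > 0"
  shows "(\<Sum>k\<le>K. (-1) ^ k * real (K choose k) / (real k + e)) = fact K / pochhammer e (Suc K)"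
  using assms
proof (induction K arbitrary: e)
  case 0
  then show ?case by simp
next
  case (Suc K)
  have "(\<Sum>k\<le>Suc K. (-1) ^ k * real (Suc K choose k) / (real k + e)) =
        fact K / pochhammer e (Suc K) - fact K / pochhammer (e + 1) (Suc K)"
    using alternating_binomial_sum_Suc[of K "\<lambda>k. 1 / (real k + e)"] Suc.IH[of e] Suc.IH[of "e + 1"] Suc.prems
    by (simp add: add_ac)
  also have "\<dots> = fact (Suc K) / pochhammer e (Suc (Suc K))"
  proof -
    have pos: "pochhammer e (Suc K) > 0" "pochhammer (e + 1) (Suc K) > 0"
      using Suc.prems by (auto intro: pochhammer_pos)
    have "fact K / pochhammer e (Suc K) = fact K * (e + real (Suc K)) / pochhammer e (Suc (Suc K))"
      using pos Suc.prems by (simp add: pochhammer_rec')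
    moreover have "fact K / pochhammer (e + 1) (Suc K) = fact K * e / pochhammer e (Suc (Suc K))"
      using pos Suc.prems by (simp add: pochhammer_rec add_ac)
    ultimately show ?thesis
      by (simp add: diff_divide_distrib[symmetric] algebra_simps)
  qed
  finally show ?case .
qed

lemma pochhammer_ratio_tendsto_zero:
  fixes e e' :: real
  assumes "0 < e" "e < e'"
  shows "(\<lambda>K. pochhammer e (Suc K) / pochhammer e' (Suc K)) \<longlonglongrightarrow> 0"
proof -
  have "pochhammer e (Suc n) / pochhammer e' (Suc n) =
        real n powr (e - e') * (Gamma_series e' n / Gamma_series e n)" if "n \<ge> 1" for n
  proof -
    have "real n powr (e - e') = exp (e * ln (real n)) / exp (e' * ln (real n))"
      using that by (simp add: powr_def exp_diff algebra_simps)
    moreover have "pochhammer e (Suc n) > 0" "pochhammer e' (Suc n) > 0"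
      using assms by (auto intro: pochhammer_pos)
    ultimately show ?thesis
      using assms by (simp add: Gamma_series_def field_simps)
  qed
  then have "\<forall>\<^sub>F n in sequentially. real n powr (e - e') * (Gamma_series e' n / Gamma_series e n)
      = pochhammer e (Suc n) / pochhammer e' (Suc n)"
    by (auto simp: eventually_at_top_linorder intro!: exI[of _ 1])
  moreover have "(\<lambda>n. real n powr (e - e') * (Gamma_series e' n / Gamma_series e n)) \<longlonglongrightarrow> 0 * (Gamma e' / Gamma e)"
    using assms
    by (intro tendsto_mult tendsto_neg_powr filterlim_real_sequentially tendsto_divide Gamma_series_LIMSEQ)
       (auto simp: Gamma_real_pos[THEN less_imp_neq, symmetric])
  ultimately show ?thesis
    by (simp add: Lim_transform_eventually)
qed

lemma moment_seq_simple_fractions_nonneg: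
  fixes D :: nat and e r :: "nat \<Rightarrow> real"
  assumes "moment_seq (\<lambda>n. \<Sum>i<D. r i / (real n + e i))"
    and e_pos: "\<And>i. i < D \<Longrightarrow> e i > 0" and "0 < D"
    and e_min: "\<And>i. i < D \<Longrightarrow> i \<noteq> 0 \<Longrightarrow> e 0 < e i"
  shows "r 0 \<ge> 0"
proof -
  \<comment> \<open>The \<open>K\<close>-th alternating binomial sum is \<open>fact K / pochhammer (e 0) (Suc K) * T K\<close>, and
     in \<open>T K\<close> every term but the one of the rightmost pole \<open>- e 0\<close> vanishes as \<open>K \<longrightarrow> \<infinity>\<close>.\<close>
  define T where "T K = (\<Sum>i<D. r i * (pochhammer (e 0) (Suc K) / pochhammer (e i) (Suc K)))" for K
  have poch_pos: "pochhammer (e 0) (Suc K) > 0" for K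
    using e_pos[of 0] \<open>0 < D\<close> by (simp add: pochhammer_pos)
  have "T K \<ge> 0" for K
  proof -
    have "0 \<le> (\<Sum>k\<le>K. (-1) ^ k * real (K choose k) * (\<Sum>i<D. r i / (real k + e i)))"
      using assms(1) by (rule moment_seq_alternating_binomial_sum_nonneg)
    also have "\<dots> = (\<Sum>i<D. r i * (\<Sum>k\<le>K. (-1) ^ k * real (K choose k) / (real k + e i)))"
      by (simp add: sum_distrib_left sum_distrib_right sum.swap[of _ "{..K}"] mult_ac)
    also have "\<dots> = (\<Sum>i<D. r i * (fact K / pochhammer (e i) (Suc K)))"
      using e_pos by (simp add: alternating_binomial_sum_inverse)
    also have "\<dots> = fact K / pochhammer (e 0) (Suc K) * T K"
      unfolding T_def using poch_pos[of K] by (simp add: sum_distrib_left field_simps)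
    finally show ?thesis
      using poch_pos[of K] fact_gt_zero[of K, where 'a=real]
      by (simp add: zero_le_mult_iff zero_le_divide_iff)
  qed
  moreover have "T \<longlonglongrightarrow> (\<Sum>i<D. if i = 0 then r i else 0)"
    unfolding T_def
  proof (intro tendsto_sum)
    fix i assume "i \<in> {..<D}"
    then show "(\<lambda>K. r i * (pochhammer (e 0) (Suc K) / pochhammer (e i) (Suc K))) \<longlonglongrightarrow> (if i = 0 then r i else 0)"
      using poch_pos tendsto_mult_right[OF pochhammer_ratio_tendsto_zero[of "e 0" "e i"], of "r i"]
        e_pos[of 0] e_min[of i] \<open>0 < D\<close>
      by (auto simp: less_imp_neq[symmetric] mult.commute)
  qed
  then have "T \<longlonglongrightarrow> r 0"
    using \<open>0 < D\<close> by (simp add: sum.delta)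
  ultimately show ?thesis
    by (intro LIMSEQ_le_const) auto
qed

lemma lagrange_interpolation:
  fixes q :: "'a::field poly" and x :: "nat \<Rightarrow> 'a"
  assumes inj: "inj_on x {..<D}" and deg: "degree q < D"
  shows "poly q s = (\<Sum>i<D. poly q (x i) / (\<Prod>l\<in>{..<D}-{i}. (x i - x l)) * (\<Prod>l\<in>{..<D}-{i}. (s - x l)))"
proof -
  define c where "c i = poly q (x i) / (\<Prod>l\<in>{..<D}-{i}. (x i - x l))" for i
  define Q where "Q = (\<Sum>i<D. smult (c i) (\<Prod>l\<in>{..<D}-{i}. [:- x l, 1:]))"
  have poly_Q: "poly Q s = (\<Sum>i<D. c i * (\<Prod>l\<in>{..<D}-{i}. (s - x l)))" for s
    unfolding Q_def by (simp add: poly_sum poly_prod)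
  have "degree Q \<le> D - 1"
    unfolding Q_def
  proof (rule degree_sum_le)
    fix i assume "i \<in> {..<D}"
    then have "degree (\<Prod>l\<in>{..<D}-{i}. [:- x l, 1:]) = D - 1"
      by (subst degree_prod_eq_sum_degree) auto
    then show "degree (smult (c i) (\<Prod>l\<in>{..<D}-{i}. [:- x l, 1:])) \<le> D - 1"
      using degree_smult_le by metis
  qed simp
  moreover have "poly q (x k) = poly Q (x k)" if k: "k < D" for k
  proof -
    have vanish: "(\<Prod>l\<in>{..<D}-{i}. (x k - x l)) = 0" if "i \<in> {..<D} - {k}" for i
      using k that by (intro prod_zero) auto
    have "poly Q (x k) = c k * (\<Prod>l\<in>{..<D}-{k}. (x k - x l))"
      unfolding poly_Q using k by (subst sum.remove[of _ k]) (simp_all add: vanish)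
    moreover have "(\<Prod>l\<in>{..<D}-{k}. (x k - x l)) \<noteq> 0"
      using inj k by (subst prod_zero_iff) (auto simp: inj_on_def)
    ultimately show ?thesis by (simp add: c_def)
  qed
  moreover have "card (x ` {..<D}) = D"
    using inj by (simp add: card_image)
  ultimately have "q = Q"
    using deg by (intro poly_eqI_degree[of "x ` {..<D}"]) auto
  then have "poly q s = (\<Sum>i<D. c i * (\<Prod>l\<in>{..<D}-{i}. (s - x l)))"
    by (simp only: poly_Q)
  then show ?thesis
    by (simp only: c_def)
qed

lemma moment_seq_div_prod_nonneg:
  fixes q :: "real poly" and e :: "nat \<Rightarrow> real"
  assumes moments: "moment_seq (\<lambda>n. poly q (real n) / (\<Prod>i<D. (real n + e i)))"
    and inj: "inj_on e {..<D}" and deg: "degree q < D"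
    and e_pos: "\<And>i. i < D \<Longrightarrow> e i > 0"
    and e_min: "\<And>i. i < D \<Longrightarrow> i \<noteq> 0 \<Longrightarrow> e 0 < e i"
  shows "poly q (- e 0) \<ge> 0"
proof -
  define r where "r i = poly q (- e i) / (\<Prod>l\<in>{..<D}-{i}. (e l - e i))" for i
  have "poly q (real n) / (\<Prod>i<D. (real n + e i)) = (\<Sum>i<D. r i / (real n + e i))" for n
  proof -
    have nonzero: "(\<Prod>l\<in>A. (real n + e l)) \<noteq> 0" if "A \<subseteq> {..<D}" for A
      using e_pos that finite_subset[OF that]
      by (subst prod_zero_iff) (auto simp: add_nonneg_pos[THEN less_imp_neq, symmetric] subset_iff)
    have "inj_on (\<lambda>i. - e i) {..<D}"
      using inj by (simp add: inj_on_def)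
    from lagrange_interpolation[OF this deg, of "real n"]
    have "poly q (real n) = (\<Sum>i<D. r i * (\<Prod>l\<in>{..<D}-{i}. (real n + e l)))"
      by (simp add: r_def)
    also have "\<dots> = (\<Sum>i<D. r i / (real n + e i)) * (\<Prod>l<D. (real n + e l))"
      unfolding sum_distrib_right
      using nonzero[of "{_}"] by (intro sum.cong refl) (simp add: prod.remove[of "{..<D}"])
    finally show ?thesis
      using nonzero[of "{..<D}"] by simp
  qed
  with moments have "moment_seq (\<lambda>n. \<Sum>i<D. r i / (real n + e i))"
    by simp
  then have "r 0 \<ge> 0"
    using e_pos e_min deg by (intro moment_seq_simple_fractions_nonneg) auto
  moreover have "(\<Prod>l\<in>{..<D}-{0}. (e l - e 0)) > 0"
    using e_min by (intro prod_pos) auto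
  ultimately show ?thesis
    by (simp add: r_def zero_le_divide_iff)
qed

lemma moment_seq_div_power_nonneg:
  fixes q :: "real poly" and a :: real
  assumes moments: "moment_seq (\<lambda>n. poly q (real n) / (real n + a) ^ D)"
    and a: "a > 0" and deg: "degree q < D"
  shows "poly q (- a) \<ge> 0"
proof -
  \<comment> \<open>Split the \<open>D\<close>-fold pole at \<open>- a\<close> into simple poles in \<open>(- a, \<epsilon> - a]\<close>.\<close>
  have perturbed: "poly q (\<epsilon> - a) \<ge> 0" if \<epsilon>: "0 < \<epsilon>" "\<epsilon> < a" for \<epsilon>
  proof -
    define e where "e i = a - \<epsilon> / (real i + 1)" for i
    have e_pos: "e i > 0" and e_le: "e i \<le> a" for i
      using \<epsilon> by (auto simp: e_def field_simps intro: add_less_le_mono[of _ a 0, simplified])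
    have "e 0 < e i" if "i \<noteq> 0" for i
      using \<epsilon> that by (simp add: e_def field_simps)
    moreover have "inj_on e {..<D}"
      using \<epsilon> by (auto simp: e_def inj_on_def field_simps)
    moreover have "moment_seq (\<lambda>n. poly q (real n) / (\<Prod>i<D. (real n + e i)))"
    proof -
      have "moment_seq (\<lambda>n. poly q (real n) / (real n + a) ^ D * (\<Prod>i<D. (real n + a) / (real n + e i)))"
        using e_pos e_le by (intro moment_seq_mult moments moment_seq_prod moment_seq_shift_ratio) auto
      moreover have "poly q (real n) / (real n + a) ^ D * (\<Prod>i<D. (real n + a) / (real n + e i))
          = poly q (real n) / (\<Prod>i<D. (real n + e i))" for n
        using a by (simp add: prod_dividef)
      ultimately show ?thesis by simp
    qed
    ultimately have "poly q (- e 0) \<ge> 0"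
      using deg e_pos by (intro moment_seq_div_prod_nonneg) auto
    then show ?thesis
      by (simp add: e_def)
  qed
  have "\<forall>\<^sub>F \<epsilon> in at_right 0. poly q (\<epsilon> - a) \<ge> 0"
    using eventually_at_right_real[OF a] by (rule eventually_mono) (auto intro: perturbed)
  moreover have "((\<lambda>\<epsilon>. poly q (\<epsilon> - a)) \<longlongrightarrow> poly q (- a)) (at_right 0)"
    by (rule tendsto_eq_intros refl)+ simp
  ultimately show ?thesis
    by (intro tendsto_lowerbound) auto
qed

lemma moment_seq_poly_div_power:
  fixes \<alpha> :: "nat \<Rightarrow> real" and a :: real
  assumes "finite A" "a > 0" "\<forall>j\<in>A. \<alpha> j \<le> - a"
  shows "moment_seq (\<lambda>n. poly (\<Prod>j\<in>A. [:- \<alpha> j, 1:] ^ b j) (real n) / (real n + a) ^ (\<Sum>j\<in>A. b j))"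
proof -
  have "moment_seq (\<lambda>n. \<Prod>j\<in>A. ((real n + - \<alpha> j) / (real n + a)) ^ b j)"
    using assms by (intro moment_seq_prod moment_seq_power moment_seq_shift_ratio) auto
  then show ?thesis
    by (simp add: poly_prod power_divide prod_dividef power_sum)
qed

lemma moment_seq_inverse_poly:
  fixes \<alpha> :: "nat \<Rightarrow> real"
  assumes "finite A" "\<forall>j\<in>A. \<alpha> j < 0"
  shows "moment_seq (\<lambda>n. 1 / poly (\<Prod>j\<in>A. [:- \<alpha> j, 1:] ^ b j) (real n))"
proof -
  have "moment_seq (\<lambda>n. \<Prod>j\<in>A. (1 / (real n + - \<alpha> j)) ^ b j)"
    using assms by (intro moment_seq_prod moment_seq_power moment_seq_inverse) auto
  then show ?thesis
    by (simp add: poly_prod power_one_over prod_dividef)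
qed

lemma poly_prod_linear_powers_pos:
  fixes \<alpha> :: "nat \<Rightarrow> real" and x :: real
  assumes "\<forall>j\<in>J. \<alpha> j < 0" "x \<ge> 0"
  shows "poly (\<Prod>j\<in>J. [:- \<alpha> j, 1:] ^ b j) x > 0"
  unfolding poly_prod using assms
  by (intro prod_pos) (auto intro!: zero_less_power simp: less_le_trans[of _ 0])

lemma moment_seq_div_poly_imp_nonneg:
  fixes \<alpha> :: "nat \<Rightarrow> real" and b :: "nat \<Rightarrow> nat" and J :: "nat set" and q :: "real poly"
  defines "p \<equiv> \<Prod>j\<in>J. [:- \<alpha> j, 1:] ^ b j"
  assumes moments: "moment_seq (\<lambda>n. poly q (real n) / poly p (real n))"
    and J: "finite J" "j\<^sub>0 \<in> J" and largest: "\<forall>j\<in>J. \<alpha> j \<le> \<alpha> j\<^sub>0" and neg: "\<alpha> j\<^sub>0 < 0"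
    and deg: "degree q < degree p"
  shows "poly q (\<alpha> j\<^sub>0) \<ge> 0"
proof -
  have "degree p = (\<Sum>j\<in>J. b j)"
    unfolding p_def by (simp add: degree_prod_sum_eq degree_linear_power)
  then have "moment_seq (\<lambda>n. poly p (real n) / (real n + - \<alpha> j\<^sub>0) ^ degree p)"
    using moment_seq_poly_div_power[of J "- \<alpha> j\<^sub>0" \<alpha> b] J largest neg by (simp add: p_def)
  with moments have "moment_seq (\<lambda>n. poly q (real n) / poly p (real n) * (poly p (real n) / (real n + - \<alpha> j\<^sub>0) ^ degree p))"
    by (rule moment_seq_mult)
  moreover have "poly p (real n) > 0" for n
    unfolding p_def using largest neg by (intro poly_prod_linear_powers_pos) force+
  ultimately have "poly q (- (- \<alpha> j\<^sub>0)) \<ge> 0"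
    using neg by (intro moment_seq_div_power_nonneg[OF _ _ deg]) (simp_all add: less_imp_neq[symmetric])
  then show ?thesis by simp
qed

lemma moment_seq_linear_div_poly:
  fixes \<alpha> :: "nat \<Rightarrow> real" and c :: real
  assumes J: "finite J" "j\<^sub>0 \<in> J" "b j\<^sub>0 \<noteq> 0" and neg: "\<forall>j\<in>J. \<alpha> j < 0" and c: "c \<ge> - \<alpha> j\<^sub>0"
  shows "moment_seq (\<lambda>n. (real n + c) / poly (\<Prod>j\<in>J. [:- \<alpha> j, 1:] ^ b j) (real n))"
proof -
  obtain k where k: "b j\<^sub>0 = Suc k"
    using J not0_implies_Suc by blast
  define b' where "b' = b(j\<^sub>0 := k)"
  have "poly (\<Prod>j\<in>J. [:- \<alpha> j, 1:] ^ b j) x = (x + - \<alpha> j\<^sub>0) * poly (\<Prod>j\<in>J. [:- \<alpha> j, 1:] ^ b' j) x" for x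
    unfolding poly_prod
    by (subst (1 2) prod.remove[OF J(1,2)]) (auto simp: b'_def k algebra_simps intro!: prod.cong)
  moreover have "moment_seq (\<lambda>n. (real n + c) / (real n + - \<alpha> j\<^sub>0) * (1 / poly (\<Prod>j\<in>J. [:- \<alpha> j, 1:] ^ b' j) (real n)))"
    using J neg c by (intro moment_seq_mult moment_seq_shift_ratio moment_seq_inverse_poly) auto
  ultimately show ?thesis
    by simp
qed

lemma hausdorff_moment_seq_iff: "hausdorff_moment_seq x \<longleftrightarrow> (\<forall>n. x n > 0) \<and> moment_seq x"
  unfolding hausdorff_moment_seq_def moment_seq_def by simp

theorem mainTheorem6:
  fixes m :: nat and \<alpha> :: "nat \<Rightarrow> real" and b :: "nat \<Rightarrow> nat"
    and p q :: "real poly"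
  assumes m_pos: "m \<ge> 1"
    and distinct: "inj_on \<alpha> {1..m}"
    and neg: "\<forall>j\<in>{1..m}. \<alpha> j < 0"
    and b_pos: "\<forall>j\<in>{1..m}. b j \<ge> 1"
    and largest: "\<forall>j\<in>{1..m}. \<alpha> j \<le> \<alpha> 1"
    and p_def: "p = (\<Prod>j\<in>{1..m}. [:- \<alpha> j, 1:] ^ b j)"
    and deg: "degree q < degree p"
    and coprime_roots: "\<forall>x. poly p x = 0 \<longrightarrow> poly q x \<noteq> 0"
  shows "(hausdorff_moment_seq (\<lambda>n. poly q (real n) / poly p (real n)) \<longrightarrow> poly q (\<alpha> 1) > 0)
       \<and> ((lead_coeff q = 1 \<and> degree q = 1 \<and> poly q (\<alpha> 1) > 0)
            \<longrightarrow> hausdorff_moment_seq (\<lambda>n. poly q (real n) / poly p (real n)))"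
proof -
  have one: "1 \<in> {1..m}" and b1: "b 1 \<noteq> 0"
    using m_pos b_pos by force+
  have p_pos: "poly p (real n) > 0" for n
    unfolding p_def using neg by (intro poly_prod_linear_powers_pos) auto
  show ?thesis
  proof (intro conjI impI)
    assume "hausdorff_moment_seq (\<lambda>n. poly q (real n) / poly p (real n))"
    then have "poly q (\<alpha> 1) \<ge> 0"
      using one largest neg deg unfolding hausdorff_moment_seq_iff p_def
      by (intro moment_seq_div_poly_imp_nonneg[where J="{1..m}"]) auto
    moreover have "poly p (\<alpha> 1) = 0"
      using one b1 unfolding p_def poly_prod by (intro prod_zero) (auto intro!: bexI[of _ 1])
    ultimately show "poly q (\<alpha> 1) > 0"
      using coprime_roots by force
  next
    assume q: "lead_coeff q = 1 \<and> degree q = 1 \<and> poly q (\<alpha> 1) > 0"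
    then have q_linear: "poly q x = x + coeff q 0" for x
      by (elim conjE) (simp add: poly_altdef)
    have "moment_seq (\<lambda>n. (real n + coeff q 0) / poly p (real n))"
      unfolding p_def using one b1 neg q
      by (intro moment_seq_linear_div_poly) (auto simp: q_linear)
    moreover have "poly q (real n) > 0" for n
      using q neg one of_nat_0_le_iff[of n] by (force simp: q_linear)
    ultimately show "hausdorff_moment_seq (\<lambda>n. poly q (real n) / poly p (real n))"
      using p_pos by (simp add: hausdorff_moment_seq_iff q_linear)
  qed
qed

end
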